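(* Let $G=(V,E)$ be a connected graph with at least two vertices that contains neither the claw $K_{1,3}$ nor the path $P_6$ as an induced subgraph. Then for every $v\in V$: $v\in\mathrm{core}(G)$ if and only if $\gamma(G-v)>\gamma(G)$.
   Context: All graphs are finite, simple and undirected. The claw $K_{1,3}$ is the star with one center and three leaves; $P_6$ is the chordless path on six vertices. $\gamma(G)$ is the domination number; a minimum dominating set (mds) is a dominating set of size $\gamma(G)$; $\mathrm{core}(G)$ is the set of vertices belonging to every mds. $G-v$ is $G$ with $v$ deleted. *)

theory Defs
  imports Main
begin

definition graph :: "'a set \<Rightarrow> ('a \<Rightarrow> 'a \<Rightarrow> bool) \<Rightarrow> bool" where
  "graph V E \<longleftrightarrow> finite V \<and> (\<forall>u w. E u w \<longrightarrow> u \<in> V \<and> w \<in> V)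
     \<and> (\<forall>u w. E u w \<longrightarrow> E w u) \<and> (\<forall>u. \<not> E u u)"

definition connected_graph :: "'a set \<Rightarrow> ('a \<Rightarrow> 'a \<Rightarrow> bool) \<Rightarrow> bool" where
  "connected_graph V E \<longleftrightarrow> (\<forall>u\<in>V. \<forall>w\<in>V. E\<^sup>*\<^sup>* u w)"

definition has_induced :: "'a set \<Rightarrow> ('a \<Rightarrow> 'a \<Rightarrow> bool) \<Rightarrow> nat \<Rightarrow> (nat \<Rightarrow> nat \<Rightarrow> bool) \<Rightarrow> bool" where
  "has_induced V E n H \<longleftrightarrow> (\<exists>f. inj_on f {0..<n} \<and> f ` {0..<n} \<subseteq> V \<and>
     (\<forall>i<n. \<forall>j<n. E (f i) (f j) \<longleftrightarrow> H i j))"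

definition claw_adj :: "nat \<Rightarrow> nat \<Rightarrow> bool" where
  "claw_adj i j \<longleftrightarrow> i \<noteq> j \<and> (i = 0 \<or> j = 0)"

definition path_adj :: "nat \<Rightarrow> nat \<Rightarrow> bool" where
  "path_adj i j \<longleftrightarrow> i = Suc j \<or> j = Suc i"

definition claw_free :: "'a set \<Rightarrow> ('a \<Rightarrow> 'a \<Rightarrow> bool) \<Rightarrow> bool" where
  "claw_free V E \<longleftrightarrow> \<not> has_induced V E 4 claw_adj"

definition P6_free :: "'a set \<Rightarrow> ('a \<Rightarrow> 'a \<Rightarrow> bool) \<Rightarrow> bool" where
  "P6_free V E \<longleftrightarrow> \<not> has_induced V E 6 path_adj"

definition dominating :: "'a set \<Rightarrow> ('a \<Rightarrow> 'a \<Rightarrow> bool) \<Rightarrow> 'a set \<Rightarrow> bool" where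
  "dominating V E D \<longleftrightarrow> D \<subseteq> V \<and> (\<forall>x\<in>V. x \<in> D \<or> (\<exists>y\<in>D. E x y))"

definition domination_number :: "'a set \<Rightarrow> ('a \<Rightarrow> 'a \<Rightarrow> bool) \<Rightarrow> nat" where
  "domination_number V E = Min (card ` {D. dominating V E D})"

definition mds :: "'a set \<Rightarrow> ('a \<Rightarrow> 'a \<Rightarrow> bool) \<Rightarrow> 'a set \<Rightarrow> bool" where
  "mds V E D \<longleftrightarrow> dominating V E D \<and> card D = domination_number V E"

definition core :: "'a set \<Rightarrow> ('a \<Rightarrow> 'a \<Rightarrow> bool) \<Rightarrow> 'a set" where
  "core V E = {v\<in>V. \<forall>D. mds V E D \<longrightarrow> v \<in> D}"

definition del_vertex_V :: "'a set \<Rightarrow> 'a \<Rightarrow> 'a set" where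
  "del_vertex_V V v = V - {v}"

definition del_vertex_E :: "('a \<Rightarrow> 'a \<Rightarrow> bool) \<Rightarrow> 'a \<Rightarrow> 'a \<Rightarrow> 'a \<Rightarrow> bool" where
  "del_vertex_E E v x y \<longleftrightarrow> E x y \<and> x \<noteq> v \<and> y \<noteq> v"

end

theory Submission
  imports Defs
begin

text \<open>
  Suppose \<open>v\<close> lies in every minimum dominating set but \<open>G - v\<close> has a dominating set \<open>D'\<close>
  of size at most \<open>\<gamma>(G)\<close>. Replacing a vertex of \<open>D'\<close>, or \<open>v\<close> in a minimum dominating set,
  by a neighbour of \<open>v\<close> must then destroy domination, since otherwise we obtain a dominating set
  of size \<open>\<le> \<gamma>(G)\<close> avoiding \<open>v\<close>; the undominated vertex is a private neighbour of the removed
  one. This yields two non-adjacent private neighbours \<open>p\<^sub>1, p\<^sub>2\<close> of \<open>v\<close> with respect to a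
  minimum dominating set \<open>D\<close>, dominated in \<open>D'\<close> by \<open>w\<^sub>1, w\<^sub>2\<close>, and private neighbours \<open>x, y\<close>
  of \<open>w\<^sub>1, w\<^sub>2\<close> with respect to \<open>D'\<close>. Claw- and \<open>P\<^sub>6\<close>-freeness force a vertex \<open>d \<in> D\<close>
  adjacent to \<open>w\<^sub>1, w\<^sub>2\<close> and make \<open>x, y\<close> two non-adjacent common neighbours of \<open>v\<close> and \<open>d\<close>;
  then \<open>D - {v, d} \<union> {x, y}\<close> is a minimum dominating set avoiding \<open>v\<close>.
\<close>

lemma card_exchange_le:
  assumes "finite D" "A \<subseteq> D" "finite B" "card B \<le> card A"
  shows "card (B \<union> (D - A)) \<le> card D"
proof -
  have "card (B \<union> (D - A)) \<le> card B + card (D - A)" by (rule card_Un_le)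
  also have "\<dots> \<le> card A + (card D - card A)"
    using assms by (simp add: card_Diff_subset finite_subset)
  also have "\<dots> = card D" using assms by (simp add: card_mono)
  finally show ?thesis .
qed

lemma finite_dominating_sets: "finite V \<Longrightarrow> finite {D. dominating V E D}"
  by (rule finite_subset[of _ "Pow V"]) (auto simp: dominating_def)

lemma domination_number_le_card:
  assumes "finite V" "dominating V E D"
  shows "domination_number V E \<le> card D"
  unfolding domination_number_def using finite_dominating_sets[OF assms(1)] assms(2)
  by (intro Min_le) auto

lemma exists_mds:
  assumes "finite V"
  obtains D where "mds V E D"
proof -
  have "dominating V E V" unfolding dominating_def by blast
  then have "domination_number V E \<in> card ` {D. dominating V E D}"
    unfolding domination_number_def using finite_dominating_sets[OF assms] by (intro Min_in) auto
  then obtain D where "dominating V E D" "card D = domination_number V E" by auto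
  then show ?thesis using that unfolding mds_def by blast
qed

lemma core_iff:
  assumes "finite V"
  shows "v \<in> core V E \<longleftrightarrow>
    v \<in> V \<and> (\<forall>S. dominating V E S \<longrightarrow> card S \<le> domination_number V E \<longrightarrow> v \<in> S)"
  using domination_number_le_card[OF assms] unfolding core_def mds_def by (auto simp: le_antisym)

lemma dominating_del_vertex_iff:
  "dominating (del_vertex_V V v) (del_vertex_E E v) D \<longleftrightarrow>
    D \<subseteq> V - {v} \<and> (\<forall>x\<in>V - {v}. x \<in> D \<or> (\<exists>y\<in>D. E x y))"
  unfolding dominating_def del_vertex_V_def del_vertex_E_def by blast

lemma domination_number_del_vertex_le:
  assumes "finite V" "dominating V E S" "v \<notin> S"
  shows "domination_number (del_vertex_V V v) (del_vertex_E E v) \<le> card S"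
proof (rule domination_number_le_card)
  show "finite (del_vertex_V V v)" using assms(1) unfolding del_vertex_V_def by blast
  show "dominating (del_vertex_V V v) (del_vertex_E E v) S"
    unfolding dominating_del_vertex_iff using assms(2,3) unfolding dominating_def by blast
qed

definition private_neighbour :: "('a \<Rightarrow> 'a \<Rightarrow> bool) \<Rightarrow> 'a set \<Rightarrow> 'a \<Rightarrow> 'a \<Rightarrow> bool" where
  "private_neighbour E D d x \<longleftrightarrow> x \<notin> D \<and> E x d \<and> (\<forall>d'\<in>D. E x d' \<longrightarrow> d' = d)"

lemma connected_neighbour_exists:
  assumes "connected_graph V E" "card V \<ge> 2" "v \<in> V"
  obtains u where "E v u"
proof -
  have "\<not> V \<subseteq> {v}"
  proof
    assume "V \<subseteq> {v}"
    then have "card V \<le> card {v}" by (intro card_mono) auto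
    with assms(2) show False by simp
  qed
  then obtain u where "u \<in> V" "u \<noteq> v" by blast
  then have "E\<^sup>*\<^sup>* v u" "u \<noteq> v" using assms(1,3) unfolding connected_graph_def by blast+
  then show ?thesis using that by (auto elim: converse_rtranclpE)
qed

lemma less_4_cases: "(i::nat) < 4 \<Longrightarrow> i = 0 \<or> i = 1 \<or> i = 2 \<or> i = 3"
  by auto

lemma less_6_cases: "(i::nat) < 6 \<Longrightarrow> i = 0 \<or> i = 1 \<or> i = 2 \<or> i = 3 \<or> i = 4 \<or> i = 5"
  by auto

locale simple_graph =
  fixes V :: "'a set" and E :: "'a \<Rightarrow> 'a \<Rightarrow> bool"
  assumes graph: "graph V E"
begin

lemma finite_vertices: "finite V"
  using graph unfolding graph_def by blast

lemma edge_sym: "E x y \<Longrightarrow> E y x"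
  using graph unfolding graph_def by blast

lemma edge_irrefl: "\<not> E x x"
  using graph unfolding graph_def by blast

lemma edge_vertices: "E x y \<Longrightarrow> x \<in> V" "E x y \<Longrightarrow> y \<in> V"
  using graph unfolding graph_def by blast+

lemma private_neighbour_of_undominated:
  assumes dom: "\<forall>z\<in>W. z \<in> D \<or> (\<exists>y\<in>D. E z y)" and "E u d" and "x \<in> W"
    and "x \<notin> insert u (D - {d})" and undom: "\<forall>y\<in>insert u (D - {d}). \<not> E x y"
  shows "private_neighbour E D d x" "x \<noteq> u" "\<not> E x u"
proof -
  have "x \<notin> D" using assms edge_sym by blast
  then obtain y where "y \<in> D" "E x y" using dom \<open>x \<in> W\<close> by blast
  then show "private_neighbour E D d x"
    using \<open>x \<notin> D\<close> undom unfolding private_neighbour_def by blast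
  show "x \<noteq> u" "\<not> E x u" using assms(4,5) by auto
qed

lemma core_vertex_undominated:
  assumes "v \<in> core V E" "S \<subseteq> V" "v \<notin> S" "card S \<le> domination_number V E"
  obtains x where "x \<in> V" "x \<notin> S" "\<forall>y\<in>S. \<not> E x y"
proof -
  have "\<not> dominating V E S" using assms core_iff[OF finite_vertices] by blast
  then show ?thesis using that \<open>S \<subseteq> V\<close> unfolding dominating_def by blast
qed

lemma core_vertex_exchange_private_neighbour:
  assumes core: "v \<in> core V E" and "D \<subseteq> V" "card D \<le> domination_number V E"
    and dom: "\<forall>z\<in>V - {v}. z \<in> D \<or> (\<exists>y\<in>D. E z y)"
    and "d \<in> D" "v \<notin> D - {d}" "E u d" "E v u"
  obtains x where "private_neighbour E D d x" "x \<noteq> u" "\<not> E x u"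
proof -
  have "finite D" using \<open>D \<subseteq> V\<close> finite_vertices finite_subset by blast
  have "u \<in> V" "u \<noteq> v" using \<open>E v u\<close> edge_vertices edge_irrefl by blast+
  have "card ({u} \<union> (D - {d})) \<le> domination_number V E"
    using \<open>finite D\<close> \<open>d \<in> D\<close> card_exchange_le[of D "{d}" "{u}"] assms(3) by simp
  with core obtain x where x: "x \<in> V" "x \<notin> insert u (D - {d})"
    "\<forall>y\<in>insert u (D - {d}). \<not> E x y"
    using \<open>D \<subseteq> V\<close> \<open>u \<in> V\<close> \<open>u \<noteq> v\<close> \<open>v \<notin> D - {d}\<close> by (elim core_vertex_undominated) auto
  then have "x \<in> V - {v}" using \<open>E v u\<close> edge_sym by blast
  then show ?thesis
    using that private_neighbour_of_undominated[OF dom \<open>E u d\<close> _ x(2,3)] by blast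
qed

lemma core_vertex_two_private_neighbours:
  assumes core: "v \<in> core V E" and D: "mds V E D" and "E v u"
  obtains p\<^sub>1 p\<^sub>2 where "private_neighbour E D v p\<^sub>1" "private_neighbour E D v p\<^sub>2"
    "p\<^sub>1 \<noteq> p\<^sub>2" "\<not> E p\<^sub>1 p\<^sub>2"
proof -
  have "v \<in> D" "D \<subseteq> V" "card D \<le> domination_number V E"
    and dom: "\<forall>z\<in>V - {v}. z \<in> D \<or> (\<exists>y\<in>D. E z y)"
    using core D unfolding core_def mds_def dominating_def by auto
  note exchange = core_vertex_exchange_private_neighbour[OF core this(2,3) dom this(1)]
  have "E u v" using \<open>E v u\<close> edge_sym by blast
  then obtain p\<^sub>1 where p\<^sub>1: "private_neighbour E D v p\<^sub>1"
    using exchange \<open>E v u\<close> by blast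
  then have "E v p\<^sub>1" "E p\<^sub>1 v" unfolding private_neighbour_def using edge_sym by blast+
  then obtain p\<^sub>2 where "private_neighbour E D v p\<^sub>2" "p\<^sub>2 \<noteq> p\<^sub>1" "\<not> E p\<^sub>2 p\<^sub>1"
    using exchange by blast
  then show ?thesis using that p\<^sub>1 edge_sym by blast
qed

lemma core_vertex_no_neighbour_in_small_dominator:
  assumes "v \<in> core V E" "D \<subseteq> V - {v}" "card D \<le> domination_number V E"
    and dom: "\<forall>z\<in>V - {v}. z \<in> D \<or> (\<exists>y\<in>D. E z y)" and "w \<in> D"
  shows "\<not> E v w"
proof
  assume "E v w"
  obtain x where x: "x \<in> V" "x \<notin> D" "\<forall>y\<in>D. \<not> E x y"
    using core_vertex_undominated[OF assms(1) _ _ assms(3)] assms(2) by blast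
  then have "x \<noteq> v" using \<open>E v w\<close> \<open>w \<in> D\<close> by blast
  then show False using dom x by blast
qed

end

locale claw_P6_free_graph = simple_graph +
  assumes claw_free: "claw_free V E" and P6_free: "P6_free V E"
begin

lemma no_induced_claw:
  assumes "E c a" "E c b" "E c d" "a \<noteq> b" "a \<noteq> d" "b \<noteq> d"
    and "\<not> E a b" "\<not> E a d" "\<not> E b d"
  shows False
proof -
  have ne: "c \<noteq> a" "c \<noteq> b" "c \<noteq> d" using assms edge_irrefl by metis+
  have s: "E a c" "E b c" "E d c" "\<not> E b a" "\<not> E d a" "\<not> E d b"
    using assms edge_sym by metis+
  let ?f = "nth [c, a, b, d]"
  have "has_induced V E 4 claw_adj"
    unfolding has_induced_def
  proof (intro exI[of _ ?f] conjI)
    show "inj_on ?f {0..<4}" by (rule inj_on_nth) (use assms ne in auto)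
    show "?f ` {0..<4} \<subseteq> V"
      using assms edge_vertices by (auto dest!: less_4_cases)
    show "\<forall>i<4. \<forall>j<4. E (?f i) (?f j) = claw_adj i j"
    proof (intro allI impI)
      fix i j :: nat assume "i < 4" "j < 4"
      then show "E (?f i) (?f j) = claw_adj i j"
        using less_4_cases[OF \<open>i < 4\<close>] less_4_cases[OF \<open>j < 4\<close>] assms s edge_irrefl
        unfolding claw_adj_def by (elim disjE) simp_all
    qed
  qed
  then show False using claw_free unfolding claw_free_def by blast
qed

lemma no_induced_P6:
  assumes e: "E a b" "E b c" "E c d" "E d e" "E e f"
    and n: "\<not> E a c" "\<not> E a d" "\<not> E a e" "\<not> E a f" "\<not> E b d" "\<not> E b e" "\<not> E b f"
      "\<not> E c e" "\<not> E c f" "\<not> E d f"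
  shows False
proof -
  have s: "E b a" "E c b" "E d c" "E e d" "E f e" "\<not> E c a" "\<not> E d a" "\<not> E e a" "\<not> E f a"
    "\<not> E d b" "\<not> E e b" "\<not> E f b" "\<not> E e c" "\<not> E f c" "\<not> E f d"
    using e n edge_sym by blast+
  have "distinct [a, b, c, d, e, f]" using e n edge_irrefl edge_sym by auto
  let ?f = "nth [a, b, c, d, e, f]"
  have "has_induced V E 6 path_adj"
    unfolding has_induced_def
  proof (intro exI[of _ ?f] conjI)
    show "inj_on ?f {0..<6}" by (rule inj_on_nth) (use \<open>distinct _\<close> in auto)
    show "?f ` {0..<6} \<subseteq> V"
      using e edge_vertices by (auto dest!: less_6_cases)
    show "\<forall>i<6. \<forall>j<6. E (?f i) (?f j) = path_adj i j"
    proof (intro allI impI)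
      fix i j :: nat assume "i < 6" "j < 6"
      then show "E (?f i) (?f j) = path_adj i j"
        using less_6_cases[OF \<open>i < 6\<close>] less_6_cases[OF \<open>j < 6\<close>] e n s edge_irrefl
        unfolding path_adj_def by (elim disjE) simp_all
    qed
  qed
  then show False using P6_free unfolding P6_free_def by blast
qed

lemma private_pair_centre_isolated_in_dominator:
  assumes "private_neighbour E D v p\<^sub>1" "private_neighbour E D v p\<^sub>2" "p\<^sub>1 \<noteq> p\<^sub>2" "\<not> E p\<^sub>1 p\<^sub>2"
    and "d \<in> D" "d \<noteq> v"
  shows "\<not> E v d"
proof
  assume "E v d"
  have "E v p\<^sub>1" "E v p\<^sub>2" "\<not> E p\<^sub>1 d" "\<not> E p\<^sub>2 d" "p\<^sub>1 \<noteq> d" "p\<^sub>2 \<noteq> d"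
    using assms edge_sym unfolding private_neighbour_def by blast+
  then show False using no_induced_claw[of v p\<^sub>1 p\<^sub>2 d] \<open>E v d\<close> assms(3,4) by blast
qed

lemma common_neighbour_of_private_pair:
  assumes D: "dominating V E D" and "v \<in> D"
    and p: "private_neighbour E D v p\<^sub>1" "private_neighbour E D v p\<^sub>2" "p\<^sub>1 \<noteq> p\<^sub>2" "\<not> E p\<^sub>1 p\<^sub>2"
    and z: "E z p\<^sub>1" "E z p\<^sub>2" "z \<noteq> v"
  shows "E z v"
proof (rule ccontr)
  assume "\<not> E z v"
  have "z \<notin> D" using p z edge_sym unfolding private_neighbour_def by blast
  then obtain d where "d \<in> D" "E z d"
    using D edge_vertices(1)[OF \<open>E z p\<^sub>1\<close>] unfolding dominating_def by blast
  then have "d \<noteq> v" "\<not> E p\<^sub>1 d" "\<not> E p\<^sub>2 d" "p\<^sub>1 \<noteq> d" "p\<^sub>2 \<noteq> d"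
    using p \<open>\<not> E z v\<close> unfolding private_neighbour_def by blast+
  then show False using no_induced_claw[of z p\<^sub>1 p\<^sub>2 d] z p(3,4) \<open>E z d\<close> by blast
qed

lemma P6_configuration_forces_adjacency:
  assumes path: "E v p\<^sub>1" "E v p\<^sub>2" "E p\<^sub>1 w\<^sub>1" "E p\<^sub>2 w\<^sub>2"
    and nonpath: "\<not> E p\<^sub>1 p\<^sub>2" "\<not> E v w\<^sub>1" "\<not> E v w\<^sub>2" "\<not> E p\<^sub>1 w\<^sub>2" "\<not> E p\<^sub>2 w\<^sub>1" "\<not> E w\<^sub>1 w\<^sub>2"
    and d: "E d w\<^sub>1" "E d w\<^sub>2" "\<not> E d v" "\<not> E d p\<^sub>1" "\<not> E d p\<^sub>2"
    and x: "E x w\<^sub>1" "\<not> E x p\<^sub>1" "\<not> E x w\<^sub>2" "x \<noteq> p\<^sub>1"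
  shows "E x v" "E x p\<^sub>2" "E x d"
proof -
  note sym = edge_sym
  show "E x d"
  proof (rule ccontr)
    assume "\<not> E x d"
    show False
      by (rule no_induced_claw[of w\<^sub>1 p\<^sub>1 d x]) (use \<open>\<not> E x d\<close> path nonpath d x sym in metis)+
  qed
  show xv: "E x v"
  proof (rule ccontr)
    assume "\<not> E x v"
    show False
    proof (cases "E x p\<^sub>2")
      case True
      show False
        by (rule no_induced_claw[of p\<^sub>2 v w\<^sub>2 x]) (use True \<open>\<not> E x v\<close> path nonpath x sym in metis)+
    next
      case False
      show False
        by (rule no_induced_P6[of x w\<^sub>1 p\<^sub>1 v p\<^sub>2 w\<^sub>2]) (use False \<open>\<not> E x v\<close> path nonpath x sym in metis)+
    qed
  qed
  show "E x p\<^sub>2"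
  proof (rule ccontr)
    assume "\<not> E x p\<^sub>2"
    show False
      by (rule no_induced_claw[of v p\<^sub>1 p\<^sub>2 x]) (use \<open>\<not> E x p\<^sub>2\<close> xv path nonpath x sym in metis)+
  qed
qed

lemma dominating_exchange_pair:
  assumes D: "dominating V E D" and "v \<in> D" "d \<in> D"
    and xy: "E x v" "E x d" "E y v" "E y d" "x \<noteq> y" "\<not> E x y"
  shows "dominating V E (insert x (insert y (D - {v, d})))" (is "dominating V E ?S")
  unfolding dominating_def
proof (intro conjI ballI)
  show "?S \<subseteq> V" using D xy edge_vertices unfolding dominating_def by blast
  fix z assume "z \<in> V"
  show "z \<in> ?S \<or> (\<exists>t\<in>?S. E z t)"
  proof (rule ccontr)
    assume undom: "\<not> ?thesis"
    then have "z \<notin> D" using xy edge_sym by blast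
    then obtain t where "t \<in> D" "E z t" using D \<open>z \<in> V\<close> unfolding dominating_def by blast
    with undom have "t = v \<or> t = d" by blast
    then show False
      using no_induced_claw[of t x y z] \<open>E z t\<close> undom xy edge_sym by blast
  qed
qed

lemma core_vertex_common_neighbours_adjacent:
  assumes core: "v \<in> core V E" and D: "mds V E D" and "d \<in> D" "d \<noteq> v"
    and xy: "E x v" "E x d" "E y v" "E y d" "x \<noteq> y"
  shows "E x y"
proof (rule ccontr)
  assume "\<not> E x y"
  have "v \<in> D" "finite D" "dominating V E D"
    using assms finite_vertices unfolding core_def mds_def dominating_def
    by (auto intro: finite_subset)
  have "card ({x, y} \<union> (D - {v, d})) \<le> card D"
    using \<open>finite D\<close> \<open>v \<in> D\<close> \<open>d \<in> D\<close> \<open>d \<noteq> v\<close> by (intro card_exchange_le) (auto simp: card_insert_if)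
  moreover have "dominating V E ({x, y} \<union> (D - {v, d}))"
    using dominating_exchange_pair[OF \<open>dominating V E D\<close> \<open>v \<in> D\<close> \<open>d \<in> D\<close> xy \<open>\<not> E x y\<close>] by simp
  moreover have "v \<notin> {x, y} \<union> (D - {v, d})" using xy edge_irrefl by blast
  ultimately show False using core D core_iff[OF finite_vertices] unfolding mds_def by metis
qed

lemma far_dominators_of_private_pair:
  assumes core: "v \<in> core V E" and D: "mds V E D"
    and p: "private_neighbour E D v p\<^sub>1" "private_neighbour E D v p\<^sub>2" "p\<^sub>1 \<noteq> p\<^sub>2" "\<not> E p\<^sub>1 p\<^sub>2"
    and D': "D' \<subseteq> V - {v}" "card D' \<le> domination_number V E"
    and D'dom: "\<forall>z\<in>V - {v}. z \<in> D' \<or> (\<exists>w\<in>D'. E z w)"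
  obtains w\<^sub>1 w\<^sub>2 where "w\<^sub>1 \<in> D'" "w\<^sub>2 \<in> D'" "E p\<^sub>1 w\<^sub>1" "E p\<^sub>2 w\<^sub>2"
    "\<not> E v w\<^sub>1" "\<not> E v w\<^sub>2" "\<not> E p\<^sub>2 w\<^sub>1" "\<not> E p\<^sub>1 w\<^sub>2"
proof -
  have far: "\<not> E v w" if "w \<in> D'" for w
    using core_vertex_no_neighbour_in_small_dominator[OF core D' D'dom that] .
  have "\<exists>w\<in>D'. E p w" if "E v p" for p
  proof -
    have "p \<in> V - {v}" using that edge_vertices edge_irrefl by blast
    moreover have "p \<notin> D'" using far that by blast
    ultimately show ?thesis using D'dom by blast
  qed
  moreover have "E v p\<^sub>1" "E v p\<^sub>2" using p edge_sym unfolding private_neighbour_def by blast+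
  ultimately obtain w\<^sub>1 w\<^sub>2 where w: "w\<^sub>1 \<in> D'" "w\<^sub>2 \<in> D'" "E p\<^sub>1 w\<^sub>1" "E p\<^sub>2 w\<^sub>2" by blast
  have "dominating V E D" "v \<in> D" using core D unfolding mds_def core_def by blast+
  moreover have "w\<^sub>1 \<noteq> v" "w\<^sub>2 \<noteq> v" using w D' by blast+
  moreover have "p\<^sub>2 \<noteq> p\<^sub>1" "\<not> E p\<^sub>2 p\<^sub>1" using p(3,4) edge_sym by blast+
  ultimately have "\<not> E p\<^sub>2 w\<^sub>1" "\<not> E p\<^sub>1 w\<^sub>2"
    using common_neighbour_of_private_pair[of D v p\<^sub>1 p\<^sub>2 w\<^sub>1]
      common_neighbour_of_private_pair[of D v p\<^sub>2 p\<^sub>1 w\<^sub>2] p w far edge_sym by blast+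
  then show ?thesis using that w far by blast
qed

lemma common_dominator_of_far_pair:
  assumes D: "dominating V E D" and "v \<in> D"
    and p: "private_neighbour E D v p\<^sub>1" "private_neighbour E D v p\<^sub>2" "p\<^sub>1 \<noteq> p\<^sub>2" "\<not> E p\<^sub>1 p\<^sub>2"
    and w: "E p\<^sub>1 w\<^sub>1" "E p\<^sub>2 w\<^sub>2" "w\<^sub>1 \<noteq> v" "\<not> E v w\<^sub>1" "\<not> E v w\<^sub>2" "\<not> E p\<^sub>2 w\<^sub>1" "\<not> E p\<^sub>1 w\<^sub>2"
      "\<not> E w\<^sub>1 w\<^sub>2"
  obtains d where "d \<in> D" "d \<noteq> v" "E d w\<^sub>1" "E d w\<^sub>2" "\<not> E d v" "\<not> E d p\<^sub>1" "\<not> E d p\<^sub>2"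
proof -
  note sym = edge_sym
  have "w\<^sub>1 \<notin> D" using p w unfolding private_neighbour_def by blast
  then obtain d where d: "d \<in> D" "E w\<^sub>1 d"
    using D edge_vertices(2)[OF w(1)] unfolding dominating_def by blast
  then have "d \<noteq> v" using w sym by blast
  then have dn: "\<not> E d v" "\<not> E d p\<^sub>1" "\<not> E d p\<^sub>2"
    using private_pair_centre_isolated_in_dominator[OF p d(1)] p d(1) sym
    unfolding private_neighbour_def by blast+
  have "E v p\<^sub>1" "E v p\<^sub>2" using p sym unfolding private_neighbour_def by blast+
  have "E d w\<^sub>2"
  proof (rule ccontr)
    assume "\<not> E d w\<^sub>2"
    show False
      by (rule no_induced_P6[of d w\<^sub>1 p\<^sub>1 v p\<^sub>2 w\<^sub>2])
        (use \<open>\<not> E d w\<^sub>2\<close> \<open>E v p\<^sub>1\<close> \<open>E v p\<^sub>2\<close> d dn w p(4) sym in metis)+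
  qed
  then show ?thesis using that d \<open>d \<noteq> v\<close> dn sym by blast
qed

lemma deletion_dominator_exceeds_domination_number:
  assumes core: "v \<in> core V E" and "E v u"
    and D': "dominating (del_vertex_V V v) (del_vertex_E E v) D'"
  shows "domination_number V E < card D'"
proof (rule ccontr)
  note sym = edge_sym
  assume "\<not> ?thesis"
  then have small: "card D' \<le> domination_number V E" by simp
  have D'V: "D' \<subseteq> V - {v}" and D'dom: "\<forall>z\<in>V - {v}. z \<in> D' \<or> (\<exists>w\<in>D'. E z w)"
    using D' unfolding dominating_del_vertex_iff by blast+
  obtain D where D: "mds V E D" using exists_mds[OF finite_vertices] .
  then have Ddom: "dominating V E D" and "v \<in> D"
    using core unfolding mds_def core_def by blast+
  obtain p\<^sub>1 p\<^sub>2 where p: "private_neighbour E D v p\<^sub>1" "private_neighbour E D v p\<^sub>2"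
    "p\<^sub>1 \<noteq> p\<^sub>2" "\<not> E p\<^sub>1 p\<^sub>2"
    using core_vertex_two_private_neighbours[OF core D \<open>E v u\<close>] .
  then have vp: "E v p\<^sub>1" "E v p\<^sub>2" unfolding private_neighbour_def using sym by blast+
  obtain w\<^sub>1 w\<^sub>2 where w: "w\<^sub>1 \<in> D'" "w\<^sub>2 \<in> D'" "E p\<^sub>1 w\<^sub>1" "E p\<^sub>2 w\<^sub>2"
    and vw: "\<not> E v w\<^sub>1" "\<not> E v w\<^sub>2" and pw: "\<not> E p\<^sub>2 w\<^sub>1" "\<not> E p\<^sub>1 w\<^sub>2"
    using far_dominators_of_private_pair[OF core D p D'V small D'dom] .
  have "v \<notin> D' - {w\<^sub>1}" "v \<notin> D' - {w\<^sub>2}" "E w\<^sub>1 p\<^sub>1" "E w\<^sub>2 p\<^sub>2" using D'V w sym by blast+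
  note exchange = core_vertex_exchange_private_neighbour[OF core _ small D'dom]
  obtain x where x: "private_neighbour E D' w\<^sub>1 x" "x \<noteq> p\<^sub>1" "\<not> E x p\<^sub>1"
    using exchange[OF _ \<open>w\<^sub>1 \<in> D'\<close> \<open>v \<notin> D' - {w\<^sub>1}\<close> \<open>E p\<^sub>1 w\<^sub>1\<close> vp(1)] D'V by blast
  obtain y where y: "private_neighbour E D' w\<^sub>2 y" "y \<noteq> p\<^sub>2" "\<not> E y p\<^sub>2"
    using exchange[OF _ \<open>w\<^sub>2 \<in> D'\<close> \<open>v \<notin> D' - {w\<^sub>2}\<close> \<open>E p\<^sub>2 w\<^sub>2\<close> vp(2)] D'V by blast
  have "w\<^sub>1 \<noteq> w\<^sub>2" using w pw by blast
  then have xy: "E x w\<^sub>1" "\<not> E x w\<^sub>2" "E y w\<^sub>2" "\<not> E y w\<^sub>1" "x \<notin> D'" "y \<notin> D'"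
    using x y w unfolding private_neighbour_def by blast+
  show False
  proof (cases "E w\<^sub>1 w\<^sub>2")
    case True
    show False
      by (rule no_induced_claw[of w\<^sub>1 p\<^sub>1 w\<^sub>2 x]) (use True x xy w vw vp pw sym in metis)+
  next
    case False
    obtain d where d: "d \<in> D" "d \<noteq> v" "E d w\<^sub>1" "E d w\<^sub>2" and dn: "\<not> E d v" "\<not> E d p\<^sub>1" "\<not> E d p\<^sub>2"
      using common_dominator_of_far_pair[OF Ddom \<open>v \<in> D\<close> p w(3,4) _ vw pw False] D'V w(1)
      by blast
    have "\<not> E p\<^sub>2 p\<^sub>1" "\<not> E w\<^sub>2 w\<^sub>1" using p(4) False sym by blast+
    have "E x v" "E x p\<^sub>2" "E x d"
      using P6_configuration_forces_adjacency[OF vp w(3,4) p(4) vw pw(2,1) False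
          d(3,4) dn xy(1) x(3) xy(2) x(2)] by blast+
    moreover have "E y v" "E y d"
      using P6_configuration_forces_adjacency[OF vp(2,1) w(4,3) \<open>\<not> E p\<^sub>2 p\<^sub>1\<close> vw(2,1) pw
          \<open>\<not> E w\<^sub>2 w\<^sub>1\<close> d(4,3) dn(1,3,2) xy(3) y(3) xy(4) y(2)] by blast+
    moreover have "x \<noteq> y" using \<open>E x p\<^sub>2\<close> y(3) by blast
    ultimately have "E x y"
      using core_vertex_common_neighbours_adjacent[OF core D d(1,2)] by blast
    show False
      by (rule no_induced_claw[of x p\<^sub>2 w\<^sub>1 y])
        (use \<open>E x y\<close> \<open>E x p\<^sub>2\<close> xy y w vw vp pw sym in metis)+
  qed
qed

lemma core_vertex_domination_number_increases:
  assumes "v \<in> core V E" "E v u"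
  shows "domination_number V E < domination_number (del_vertex_V V v) (del_vertex_E E v)"
proof -
  have "finite (del_vertex_V V v)" using finite_vertices unfolding del_vertex_V_def by blast
  then obtain D' where "mds (del_vertex_V V v) (del_vertex_E E v) D'" by (rule exists_mds)
  then show ?thesis
    using deletion_dominator_exceeds_domination_number[OF assms, of D'] by (simp add: mds_def)
qed

end

theorem proposition4:
  fixes V :: "'a set" and E :: "'a \<Rightarrow> 'a \<Rightarrow> bool"
  assumes "graph V E" and "connected_graph V E" and "card V \<ge> 2"
    and "claw_free V E" and "P6_free V E"
    and "v \<in> V"
  shows "v \<in> core V E \<longleftrightarrow>
    domination_number (del_vertex_V V v) (del_vertex_E E v) > domination_number V E"
proof -
  interpret claw_P6_free_graph V E using assms(1,4,5) by unfold_locales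
  show ?thesis
  proof
    assume "v \<in> core V E"
    moreover obtain u where "E v u" using connected_neighbour_exists[OF assms(2,3,6)] .
    ultimately show "domination_number V E < domination_number (del_vertex_V V v) (del_vertex_E E v)"
      by (rule core_vertex_domination_number_increases)
  next
    assume "domination_number V E < domination_number (del_vertex_V V v) (del_vertex_E E v)"
    then have "v \<in> S" if "dominating V E S" "card S \<le> domination_number V E" for S
      using domination_number_del_vertex_le[OF finite_vertices that(1)] that(2) by fastforce
    then show "v \<in> core V E" using core_iff[OF finite_vertices] assms(6) by blast
  qed
qed

end
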